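(* Let $X\in\mathbb{R}^{m\times n}$, $\lambda>0$, and let $f:\mathbb{R}^{m\times n}\to\mathbb{R}$ be an arbitrary function. Consider the original R-PCA problem $$\min_{A,E\in\mathbb{R}^{m\times n}} \operatorname{rank}(A)+\lambda f(E)\quad\text{s.t.}\quad X=A+E, \tag{P}$$ and the relaxed R-LatLRR problem $$\min_{Z\in\mathbb{R}^{n\times n},\,L\in\mathbb{R}^{m\times m},\,E\in\mathbb{R}^{m\times n}} \|Z\|_*+\|L\|_*+\lambda f(E)\quad\text{s.t.}\quad X-E=(X-E)Z+L(X-E). \tag{U}$$ (i) Let $(A^*,E^* )$ be any optimal solution of (P), let $r=\operatorname{rank}(A^* )$, and let $A^*=U_{A^*}\Sigma_{A^*}V_{A^*}^T$ be its skinny SVD. Let $\widehat W\in\mathbb{R}^{r\times r}$ be any matrix such that (a) $\widehat W$ is block diagonal with blocks compatible with $\Sigma_{A^*}$, i.e., $[\Sigma_{A^*}]_{ii}\neq[\Sigma_{A^*}]_{jj}$ implies $\widehat W_{ij}=0$; and (b) both $\widehat W$ and $I-\widehat W$ are positive semi-definite. Then $(Z^*,L^*,E^* )$ is a minimizer of (U), where $$Z^*=V_{A^*}\widehat WV_{A^*}^T,\qquad L^*=U_{A^*}(I-\widehat W)U_{A^*}^T.$$ (ii) Conversely, if $(Z^*,L^*,E^* )$ is any optimal solution of (U), then $(X-E^*,E^* )$ is a minimizer of (P).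
   Context: $\|\cdot\|_*$ denotes the nuclear norm (sum of singular values). The skinny SVD of a matrix $A$ of rank $r$ is $A=U_A\Sigma_AV_A^T$ with $U_A,V_A$ having $r$ orthonormal columns and $\Sigma_A$ an $r\times r$ diagonal matrix with positive diagonal entries. $I$ denotes the identity matrix of the appropriate size. *)

theory Defs
  imports "Jordan_Normal_Form.DL_Rank" "Jordan_Normal_Form.Char_Poly"
    "HOL-Computational_Algebra.Polynomial"
begin

definition mrank :: "real mat \<Rightarrow> nat" where
  "mrank A = vec_space.rank (dim_row A) (A :: real mat)"

(* Nuclear norm: sum of the singular values, i.e. of the square roots of the
   eigenvalues (with multiplicity) of A^T A. *)
definition nuclear_norm :: "real mat \<Rightarrow> real" where
  "nuclear_norm A = sum_mset (image_mset sqrt (proots (char_poly (transpose_mat A * A))))"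

definition skinny_svd :: "real mat \<Rightarrow> nat \<Rightarrow> real mat \<Rightarrow> real mat \<Rightarrow> real mat \<Rightarrow> bool" where
  "skinny_svd A r U S V \<longleftrightarrow>
     U \<in> carrier_mat (dim_row A) r \<and> V \<in> carrier_mat (dim_col A) r \<and> S \<in> carrier_mat r r \<and>
     transpose_mat U * U = 1\<^sub>m r \<and> transpose_mat V * V = 1\<^sub>m r \<and>
     diagonal_mat S \<and> (\<forall>i<r. S $$ (i, i) > 0) \<and>
     A = U * S * transpose_mat V"

definition psd :: "real mat \<Rightarrow> bool" where
  "psd W \<longleftrightarrow> square_mat W \<and> transpose_mat W = W \<and>
     (\<forall>x \<in> carrier_vec (dim_row W). x \<bullet> (W *\<^sub>v x) \<ge> 0)"

definition feasible_P :: "real mat \<Rightarrow> real mat \<Rightarrow> real mat \<Rightarrow> bool" where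
  "feasible_P X A E \<longleftrightarrow> A \<in> carrier_mat (dim_row X) (dim_col X) \<and>
     E \<in> carrier_mat (dim_row X) (dim_col X) \<and> X = A + E"

definition minimizer_P :: "real mat \<Rightarrow> real \<Rightarrow> (real mat \<Rightarrow> real) \<Rightarrow> real mat \<Rightarrow> real mat \<Rightarrow> bool" where
  "minimizer_P X lam f A E \<longleftrightarrow> feasible_P X A E \<and>
     (\<forall>A' E'. feasible_P X A' E' \<longrightarrow> real (mrank A) + lam * f E \<le> real (mrank A') + lam * f E')"

definition feasible_U :: "real mat \<Rightarrow> real mat \<Rightarrow> real mat \<Rightarrow> real mat \<Rightarrow> bool" where
  "feasible_U X Z L E \<longleftrightarrow> Z \<in> carrier_mat (dim_col X) (dim_col X) \<and>
     L \<in> carrier_mat (dim_row X) (dim_row X) \<and>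
     E \<in> carrier_mat (dim_row X) (dim_col X) \<and>
     X - E = (X - E) * Z + L * (X - E)"

definition minimizer_U :: "real mat \<Rightarrow> real \<Rightarrow> (real mat \<Rightarrow> real) \<Rightarrow> real mat \<Rightarrow> real mat \<Rightarrow> real mat \<Rightarrow> bool" where
  "minimizer_U X lam f Z L E \<longleftrightarrow> feasible_U X Z L E \<and>
     (\<forall>Z' L' E'. feasible_U X Z' L' E' \<longrightarrow>
        nuclear_norm Z + nuclear_norm L + lam * f E \<le> nuclear_norm Z' + nuclear_norm L' + lam * f E')"

end

theory Submission
  imports Defs "Jordan_Normal_Form.Schur_Decomposition"
    "HOL-Computational_Algebra.Fundamental_Theorem_Algebra"
begin

text \<open>
  For an orthogonal projection \<open>P\<close> one has \<open>tr (Z P) \<le> \<parallel>Z\<parallel>\<^sub>*\<close>: diagonalising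
  \<open>Z\<^sup>T Z = Q D Q\<^sup>T\<close> gives \<open>tr (Z P) = \<Sum>\<^sub>i \<langle>P q\<^sub>i, Z q\<^sub>i\<rangle>\<close> with \<open>\<parallel>P q\<^sub>i\<parallel> \<le> 1\<close> and
  \<open>\<parallel>Z q\<^sub>i\<parallel> = \<surd>D\<^sub>i\<^sub>i\<close>. If \<open>A = A Z + L A\<close>, multiplying by the pseudo-inverse \<open>A\<^sup>+\<close> gives
  \<open>rank A = tr (A\<^sup>+ A) = tr (Z A\<^sup>+ A) + tr (L A A\<^sup>+) \<le> \<parallel>Z\<parallel>\<^sub>* + \<parallel>L\<parallel>\<^sub>*\<close>, and the bound is
  attained by \<open>Z = A\<^sup>+ A\<close>, \<open>L = 0\<close>. So for each \<open>E\<close> the least value of \<open>\<parallel>Z\<parallel>\<^sub>* + \<parallel>L\<parallel>\<^sub>*\<close>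
  in (U) is \<open>rank (X - E)\<close>, which yields (ii) and the optimality in (i). Feasibility in (i)
  holds because \<open>W\<close> commutes with \<open>\<Sigma>\<close>, so \<open>A Z\<^sup>* + L\<^sup>* A = U (\<Sigma> W + (I - W) \<Sigma>) V\<^sup>T = A\<close>;
  and since the nuclear norm of a positive semi-definite matrix is its trace,
  \<open>\<parallel>Z\<^sup>*\<parallel>\<^sub>* + \<parallel>L\<^sup>*\<parallel>\<^sub>* = tr W + tr (I - W) = r\<close>.
\<close>

lemma assoc_mult_mat':
  fixes A B C :: "'a::semiring_0 mat"
  assumes "dim_col A = dim_row B" "dim_col B = dim_row C"
  shows "A * B * C = A * (B * C)"
proof -
  have "A \<in> carrier_mat (dim_row A) (dim_col A)" "B \<in> carrier_mat (dim_col A) (dim_col B)"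
    "C \<in> carrier_mat (dim_col B) (dim_col C)" using assms by (auto intro!: carrier_matI)
  thus ?thesis by (rule assoc_mult_mat)
qed

lemma transpose_mult':
  fixes A B :: "'a::comm_semiring_0 mat"
  assumes "dim_col A = dim_row B"
  shows "transpose_mat (A * B) = transpose_mat B * transpose_mat A"
proof -
  have "A \<in> carrier_mat (dim_row A) (dim_col A)" "B \<in> carrier_mat (dim_col A) (dim_col B)"
    using assms by (auto intro!: carrier_matI)
  thus ?thesis by (rule transpose_mult)
qed

lemma add_minus_cancel_mat:
  fixes A E :: "'a::ab_group_add mat"
  assumes "A \<in> carrier_mat m n" "E \<in> carrier_mat m n"
  shows "(A + E) - E = A" "(A - E) + E = A"
  using assms by (auto intro!: eq_matI)

section \<open>Trace\<close>

definition trace :: "'a::comm_ring_1 mat \<Rightarrow> 'a" where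
  "trace A = (\<Sum>i<dim_row A. A $$ (i,i))"

lemma trace_mult_comm:
  fixes A B :: "'a::comm_ring_1 mat"
  assumes A: "A \<in> carrier_mat m n" and B: "B \<in> carrier_mat n m"
  shows "trace (A * B) = trace (B * A)"
proof -
  have "trace (A * B) = (\<Sum>i<m. \<Sum>j<n. A $$ (i,j) * B $$ (j,i))"
    unfolding trace_def using A B by (auto simp: scalar_prod_def atLeast0LessThan intro!: sum.cong)
  also have "\<dots> = (\<Sum>j<n. \<Sum>i<m. B $$ (j,i) * A $$ (i,j))"
    by (subst sum.swap) (simp add: mult.commute)
  also have "\<dots> = trace (B * A)"
    unfolding trace_def using A B by (auto simp: scalar_prod_def atLeast0LessThan intro!: sum.cong)
  finally show ?thesis .
qed

lemma trace_add:
  fixes A B :: "'a::comm_ring_1 mat"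
  assumes "A \<in> carrier_mat n n" "B \<in> carrier_mat n n"
  shows "trace (A + B) = trace A + trace B"
  unfolding trace_def using assms by (simp add: sum.distrib)

lemma trace_one_mat: "trace (1\<^sub>m n :: 'a::comm_ring_1 mat) = of_nat n"
  by (simp add: trace_def)

lemma trace_conj_orthonormal_cols:
  fixes Q D :: "'a::comm_ring_1 mat"
  assumes Q: "Q \<in> carrier_mat k n" and D: "D \<in> carrier_mat n n"
    and QQ: "transpose_mat Q * Q = 1\<^sub>m n"
  shows "trace (Q * D * transpose_mat Q) = trace D"
proof -
  have "trace (Q * D * transpose_mat Q) = trace (transpose_mat Q * (Q * D))"
    by (rule trace_mult_comm) (use Q D in auto)
  also have "transpose_mat Q * (Q * D) = D"
    using Q D QQ by (simp add: assoc_mult_mat[of _ n k _ n _ n, symmetric])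
  finally show ?thesis .
qed

section \<open>Spectral theorem for real symmetric matrices\<close>

definition orthonormal_mat :: "nat \<Rightarrow> real mat \<Rightarrow> bool" where
  "orthonormal_mat n Q \<longleftrightarrow> Q \<in> carrier_mat n n \<and>
     transpose_mat Q * Q = 1\<^sub>m n \<and> Q * transpose_mat Q = 1\<^sub>m n"

lemma orthonormal_matI:
  assumes "Q \<in> carrier_mat n n" "transpose_mat Q * Q = 1\<^sub>m n"
  shows "orthonormal_mat n Q"
  unfolding orthonormal_mat_def
  using assms mat_mult_left_right_inverse[of "transpose_mat Q" n Q] by auto

lemma orthonormal_mat_mult:
  assumes W: "orthonormal_mat n W" and B: "orthonormal_mat n B"
  shows "orthonormal_mat n (W * B)"
proof (rule orthonormal_matI)
  have W': "W \<in> carrier_mat n n" "transpose_mat W * W = 1\<^sub>m n"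
    and B': "B \<in> carrier_mat n n" "transpose_mat B * B = 1\<^sub>m n"
    using W B unfolding orthonormal_mat_def by auto
  show "W * B \<in> carrier_mat n n" using W' B' by auto
  have "transpose_mat (W * B) * (W * B) = transpose_mat B * (transpose_mat W * W) * B"
    using W'(1) B'(1) by (simp add: transpose_mult[of _ n n _ n] assoc_mult_mat[of _ n n _ n _ n])
  thus "transpose_mat (W * B) * (W * B) = 1\<^sub>m n" using W' B' by simp
qed

lemma complex_eigenvector_exists:
  fixes A :: "complex mat"
  assumes A: "A \<in> carrier_mat n n" and n: "n > 0"
  shows "\<exists>z v. eigenvector A v z"
proof -
  have "degree (char_poly A) = n" using degree_monic_char_poly[OF A] by auto
  hence "\<not> constant (poly (char_poly A))" using n by (simp add: constant_degree)
  then obtain z where "poly (char_poly A) z = 0" using fundamental_theorem_of_algebra by blast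
  hence "eigenvalue A z" using eigenvalue_root_char_poly[OF A] by auto
  thus ?thesis unfolding eigenvalue_def by auto
qed

lemma real_symmetric_eigenvalue_real:
  fixes S :: "real mat" and v :: "complex vec"
  assumes S: "S \<in> carrier_mat n n" and sym: "transpose_mat S = S"
    and ev: "eigenvector (map_mat complex_of_real S) v z"
  shows "Im z = 0"
proof -
  have v: "v \<in> carrier_vec n" and v0: "v \<noteq> 0\<^sub>v n"
    and Sv: "map_mat complex_of_real S *\<^sub>v v = z \<cdot>\<^sub>v v"
    using ev S unfolding eigenvector_def by auto
  have Svi: "(\<Sum>j<n. complex_of_real (S $$ (i,j)) * v $ j) = z * v $ i" if i: "i < n" for i
    using arg_cong[OF Sv, of "\<lambda>u. u $ i"] i S v by (auto simp: scalar_prod_def atLeast0LessThan)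
  have Sij: "S $$ (j,i) = S $$ (i,j)" if "i < n" "j < n" for i j
    using arg_cong[OF sym, of "\<lambda>M. M $$ (i,j)"] that S by auto
  \<comment> \<open>the Hermitian form \<open>v\<^sup>* S v\<close> is real and equals \<open>z \<parallel>v\<parallel>\<^sup>2\<close>\<close>
  define w where "w = (\<Sum>i<n. \<Sum>j<n. cnj (v $ i) * complex_of_real (S $$ (i,j)) * v $ j)"
  define N where "N = (\<Sum>i<n. (cmod (v $ i))\<^sup>2)"
  have wN: "w = z * complex_of_real N"
  proof -
    have "w = (\<Sum>i<n. cnj (v $ i) * (\<Sum>j<n. complex_of_real (S $$ (i,j)) * v $ j))"
      unfolding w_def by (simp add: sum_distrib_left mult.assoc)
    also have "\<dots> = (\<Sum>i<n. z * (cnj (v $ i) * v $ i))" using Svi by (auto simp: ac_simps)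
    also have "\<dots> = z * complex_of_real N"
      unfolding N_def of_real_sum sum_distrib_left
      by (intro sum.cong refl) (metis complex_norm_square mult.commute of_real_power)
    finally show ?thesis .
  qed
  have "cnj w = (\<Sum>i<n. \<Sum>j<n. v $ i * complex_of_real (S $$ (i,j)) * cnj (v $ j))"
    unfolding w_def by (simp add: cnj_sum)
  also have "\<dots> = (\<Sum>j<n. \<Sum>i<n. v $ i * complex_of_real (S $$ (i,j)) * cnj (v $ j))"
    by (rule sum.swap)
  also have "\<dots> = w" unfolding w_def by (intro sum.cong refl) (simp add: Sij ac_simps)
  finally have cw: "cnj w = w" .
  have "Im w = 0" using arg_cong[OF cw, of Im] by simp
  obtain i0 where i0: "i0 < n" "v $ i0 \<noteq> 0"
    using v0 v by (metis carrier_vecD eq_vecI index_zero_vec)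
  have "N > 0" unfolding N_def by (rule sum_pos2[of _ i0]) (use i0 in auto)
  with \<open>Im w = 0\<close> show ?thesis unfolding wN by simp
qed

lemma real_eigenvector_of_complex:
  fixes S :: "real mat" and v :: "complex vec"
  assumes S: "S \<in> carrier_mat n n"
    and ev: "eigenvector (map_mat complex_of_real S) v (complex_of_real e)"
  shows "\<exists>u. u \<in> carrier_vec n \<and> u \<noteq> 0\<^sub>v n \<and> S *\<^sub>v u = e \<cdot>\<^sub>v u"
proof -
  have v: "v \<in> carrier_vec n" and v0: "v \<noteq> 0\<^sub>v n"
    and Sv: "map_mat complex_of_real S *\<^sub>v v = complex_of_real e \<cdot>\<^sub>v v"
    using ev S unfolding eigenvector_def by auto
  define part where "part g = vec n (\<lambda>i. g (v $ i))" for g :: "complex \<Rightarrow> real"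
  have part_eigen: "S *\<^sub>v part g = e \<cdot>\<^sub>v part g" if g: "g = Re \<or> g = Im" for g
  proof (rule eq_vecI)
    fix i assume "i < dim_vec (e \<cdot>\<^sub>v part g)"
    hence i: "i < n" unfolding part_def by auto
    have "(\<Sum>j<n. complex_of_real (S $$ (i,j)) * v $ j) = complex_of_real e * v $ i"
      using arg_cong[OF Sv, of "\<lambda>u. u $ i"] i S v by (auto simp: scalar_prod_def atLeast0LessThan)
    from arg_cong[OF this, of g] g
    show "(S *\<^sub>v part g) $ i = (e \<cdot>\<^sub>v part g) $ i"
      using i S unfolding part_def by (auto simp: scalar_prod_def Re_sum Im_sum atLeast0LessThan)
  qed (use S in \<open>auto simp: part_def\<close>)
  obtain i0 where i0: "i0 < n" "v $ i0 \<noteq> 0"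
    using v0 v by (metis carrier_vecD eq_vecI index_zero_vec)
  then consider "Re (v $ i0) \<noteq> 0" | "Im (v $ i0) \<noteq> 0" using complex_eq_iff by auto
  then obtain g where g: "g = Re \<or> g = Im" "g (v $ i0) \<noteq> 0" by metis
  have "part g \<noteq> 0\<^sub>v n" using g(2) i0 unfolding part_def by (metis index_vec index_zero_vec(1))
  moreover have "part g \<in> carrier_vec n" unfolding part_def by simp
  ultimately show ?thesis using part_eigen[OF g(1)] by blast
qed

lemma real_symmetric_eigenvector:
  fixes S :: "real mat"
  assumes S: "S \<in> carrier_mat n n" and sym: "transpose_mat S = S" and n: "n > 0"
  shows "\<exists>e u. u \<in> carrier_vec n \<and> u \<noteq> 0\<^sub>v n \<and> S *\<^sub>v u = e \<cdot>\<^sub>v u"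
proof -
  have "map_mat complex_of_real S \<in> carrier_mat n n" using S by simp
  then obtain z v where ev: "eigenvector (map_mat complex_of_real S) v z"
    using complex_eigenvector_exists n by blast
  have "z = complex_of_real (Re z)"
    using real_symmetric_eigenvalue_real[OF S sym ev] by (simp add: complex_eq_iff)
  thus ?thesis using real_eigenvector_of_complex[OF S] ev by metis
qed

lemma orthonormal_mat_first_col:
  fixes v :: "real vec"
  assumes v: "v \<in> carrier_vec n" and v0: "v \<noteq> 0\<^sub>v n"
  shows "\<exists>W. orthonormal_mat n W \<and> col W 0 = (1 / sqrt (v \<bullet> v)) \<cdot>\<^sub>v v"
proof -
  interpret cof_vec_space n "TYPE(real)" .
  define b where "b = basis_completion v"
  from basis_completion[OF v v0, folded b_def]
  have b: "set b \<subseteq> carrier_vec n" "distinct b" "\<not> lin_dep (set b)" "length b = n" "hd b = v" by auto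
  have n: "n > 0" using v0 v by (metis carrier_vecD eq_vecI less_nat_zero_code neq0_conv index_zero_vec(2))
  obtain vs where bv: "b = v # vs" using b(4,5) n by (cases b, auto)
  define ws where "ws = gram_schmidt n b"
  from gram_schmidt_result[OF b(1) b(2) b(3) ws_def]
  have ws: "corthogonal ws" "set ws \<subseteq> carrier_vec n" "length ws = n" using b(4) by auto
  have "hd ws = v" using gram_schmidt_hd[OF v, of vs] bv ws_def by simp
  hence ws0: "ws ! 0 = v" using ws(3) n by (cases ws, auto)
  have wsc: "ws ! i \<in> carrier_vec n" if "i < n" for i using ws that by auto
  have orth: "ws ! i \<bullet> ws ! j = 0 \<longleftrightarrow> i \<noteq> j" if "i < n" "j < n" for i j
    using corthogonalD[OF ws(1), of i j] that ws(3) by (simp add: vec_conjugate_real)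
  have pos: "ws ! i \<bullet> ws ! i > 0" if i: "i < n" for i
  proof -
    have "ws ! i \<bullet> ws ! i \<ge> 0" unfolding scalar_prod_def by (auto intro: sum_nonneg)
    thus ?thesis using orth[OF i i] by auto
  qed
  define c where "c i = 1 / sqrt (ws ! i \<bullet> ws ! i)" for i
  define W where "W = mat_of_cols n (map (\<lambda>i. c i \<cdot>\<^sub>v ws ! i) [0..<n])"
  have W: "W \<in> carrier_mat n n" unfolding W_def by auto
  have colW: "col W i = c i \<cdot>\<^sub>v ws ! i" if "i < n" for i
    unfolding W_def using that wsc[OF that] by (subst col_mat_of_cols) auto
  have "transpose_mat W * W = 1\<^sub>m n"
  proof (rule eq_matI)
    fix i j assume "i < dim_row (1\<^sub>m n)" "j < dim_col (1\<^sub>m n)"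
    hence i: "i < n" and j: "j < n" by auto
    have "(transpose_mat W * W) $$ (i,j) = c i * c j * (ws ! i \<bullet> ws ! j)"
      using i j W wsc[OF i] wsc[OF j] by (simp add: colW)
    also have "\<dots> = 1\<^sub>m n $$ (i,j)"
      using orth[OF i j] pos[OF i] i j unfolding c_def by (cases "i = j") (auto simp: field_simps)
    finally show "(transpose_mat W * W) $$ (i,j) = 1\<^sub>m n $$ (i,j)" .
  qed (use W in auto)
  moreover have "col W 0 = (1 / sqrt (v \<bullet> v)) \<cdot>\<^sub>v v" using colW[OF n] ws0 unfolding c_def by simp
  ultimately show ?thesis using W orthonormal_matI by blast
qed

lemma symmetric_deflation:
  fixes S W :: "real mat"
  assumes S: "S \<in> carrier_mat (Suc k) (Suc k)" and sym: "transpose_mat S = S"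
    and W: "orthonormal_mat (Suc k) W" and ev: "S *\<^sub>v col W 0 = e \<cdot>\<^sub>v col W 0"
  shows "\<exists>A. A \<in> carrier_mat k k \<and> transpose_mat A = A \<and>
     transpose_mat W * (S * W) = four_block_mat (mat 1 1 (\<lambda>_. e)) (0\<^sub>m 1 k) (0\<^sub>m k 1) A"
proof -
  let ?n = "Suc k"
  have Wc: "W \<in> carrier_mat ?n ?n" and WW: "transpose_mat W * W = 1\<^sub>m ?n"
    using W unfolding orthonormal_mat_def by auto
  define M where "M = transpose_mat W * (S * W)"
  have M: "M \<in> carrier_mat ?n ?n" unfolding M_def using Wc S by auto
  have Msym: "transpose_mat M = M"
    unfolding M_def using Wc S sym by (simp add: transpose_mult' assoc_mult_mat')
  have Mi0: "M $$ (i, 0) = (if i = 0 then e else 0)" if i: "i < ?n" for i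
  proof -
    have "M $$ (i,0) = col W i \<bullet> (S *\<^sub>v col W 0)"
      unfolding M_def using i Wc S by (simp add: col_mult2[of _ ?n ?n _ ?n] mult_mat_vec_def)
    also have "\<dots> = e * (transpose_mat W * W) $$ (i,0)" unfolding ev using i Wc by simp
    finally show ?thesis unfolding WW using i by simp
  qed
  have M0j: "M $$ (0, j) = (if j = 0 then e else 0)" if j: "j < ?n" for j
    using Mi0[OF j] arg_cong[OF Msym, of "\<lambda>A. A $$ (0,j)"] j M by auto
  define A where "A = mat k k (\<lambda>(i,j). M $$ (Suc i, Suc j))"
  have "transpose_mat A = A"
  proof (rule eq_matI)
    fix i j assume "i < dim_row A" "j < dim_col A"
    thus "transpose_mat A $$ (i,j) = A $$ (i,j)"
      using arg_cong[OF Msym, of "\<lambda>A. A $$ (Suc i, Suc j)"] M by (auto simp: A_def)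
  qed (auto simp: A_def)
  moreover have "M = four_block_mat (mat 1 1 (\<lambda>_. e)) (0\<^sub>m 1 k) (0\<^sub>m k 1) A"
  proof (rule eq_matI)
    fix i j assume "i < dim_row (four_block_mat (mat 1 1 (\<lambda>_. e)) (0\<^sub>m 1 k) (0\<^sub>m k 1) A)"
      "j < dim_col (four_block_mat (mat 1 1 (\<lambda>_. e)) (0\<^sub>m 1 k) (0\<^sub>m k 1) A)"
    hence ij: "i < ?n" "j < ?n" by (auto simp: A_def)
    show "M $$ (i,j) = four_block_mat (mat 1 1 (\<lambda>_. e)) (0\<^sub>m 1 k) (0\<^sub>m k 1) A $$ (i,j)"
    proof (cases "i = 0 \<or> j = 0")
      case True
      thus ?thesis using Mi0 M0j ij by (auto simp: A_def)
    next
      case False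
      then obtain i' j' where "i = Suc i'" "j = Suc j'" by (cases i; cases j; auto)
      thus ?thesis using ij by (auto simp: A_def)
    qed
  qed (use M in \<open>auto simp: A_def\<close>)
  moreover have "A \<in> carrier_mat k k" unfolding A_def by simp
  ultimately show ?thesis unfolding M_def by blast
qed

lemma four_block_diagonalization:
  fixes Q D :: "real mat"
  assumes Q: "orthonormal_mat k Q" and D: "D \<in> carrier_mat k k" and dg: "diagonal_mat D"
  shows "\<exists>B D'. orthonormal_mat (Suc k) B \<and> D' \<in> carrier_mat (Suc k) (Suc k) \<and> diagonal_mat D' \<and>
    four_block_mat (mat 1 1 (\<lambda>_. e)) (0\<^sub>m 1 k) (0\<^sub>m k 1) (Q * D * transpose_mat Q)
      = B * D' * transpose_mat B"
proof -
  let ?E = "mat 1 1 (\<lambda>_. e) :: real mat"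
  have Qc: "Q \<in> carrier_mat k k" and QQ: "transpose_mat Q * Q = 1\<^sub>m k"
    using Q unfolding orthonormal_mat_def by auto
  have E: "?E \<in> carrier_mat 1 1" and one1: "1\<^sub>m 1 \<in> carrier_mat 1 1"
    and z1k: "0\<^sub>m 1 k \<in> carrier_mat 1 k" and zk1: "0\<^sub>m k 1 \<in> carrier_mat k 1"
    and Qt: "transpose_mat Q \<in> carrier_mat k k" and QD: "Q * D \<in> carrier_mat k k"
    using Qc D by auto
  define B where "B = four_block_mat (1\<^sub>m 1) (0\<^sub>m 1 k) (0\<^sub>m k 1) Q"
  define D' where "D' = four_block_mat ?E (0\<^sub>m 1 k) (0\<^sub>m k 1) D"
  have Bt: "transpose_mat B = four_block_mat (1\<^sub>m 1) (0\<^sub>m 1 k) (0\<^sub>m k 1) (transpose_mat Q)"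
    unfolding B_def by (subst transpose_four_block_mat[OF one1 z1k zk1 Qc]) auto
  have "transpose_mat B * B = 1\<^sub>m (Suc k)"
    unfolding Bt unfolding B_def using Qc QQ
    by (subst mult_four_block_mat[OF one1 z1k zk1 Qt one1 z1k zk1 Qc]) auto
  moreover have "B \<in> carrier_mat (Suc k) (Suc k)"
    unfolding B_def using four_block_carrier_mat[OF one1 Qc] by simp
  ultimately have "orthonormal_mat (Suc k) B" by (intro orthonormal_matI)
  moreover have "diagonal_mat D'"
    unfolding diagonal_mat_def D'_def
  proof (intro allI impI)
    fix i j assume ij: "i < dim_row (four_block_mat ?E (0\<^sub>m 1 k) (0\<^sub>m k 1) D)"
      "j < dim_col (four_block_mat ?E (0\<^sub>m 1 k) (0\<^sub>m k 1) D)" "i \<noteq> j"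
    show "four_block_mat ?E (0\<^sub>m 1 k) (0\<^sub>m k 1) D $$ (i,j) = 0"
    proof (cases "i = 0 \<or> j = 0")
      case False
      then obtain i' j' where "i = Suc i'" "j = Suc j'" by (cases i; cases j; auto)
      thus ?thesis using ij D dg unfolding diagonal_mat_def by auto
    qed (use ij D in auto)
  qed
  moreover have "four_block_mat ?E (0\<^sub>m 1 k) (0\<^sub>m k 1) (Q * D * transpose_mat Q) = B * D' * transpose_mat B"
  proof -
    have BD: "B * D' = four_block_mat ?E (0\<^sub>m 1 k) (0\<^sub>m k 1) (Q * D)"
      unfolding B_def D'_def using Qc D
      by (subst mult_four_block_mat[OF one1 z1k zk1 Qc E z1k zk1 D]) auto
    show ?thesis
      unfolding Bt BD using Qc D
      by (subst mult_four_block_mat[OF E z1k zk1 QD one1 z1k zk1 Qt]) auto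
  qed
  moreover have "D' \<in> carrier_mat (Suc k) (Suc k)" unfolding D'_def using D by auto
  ultimately show ?thesis by blast
qed

theorem real_symmetric_spectral:
  fixes S :: "real mat"
  assumes "S \<in> carrier_mat n n" and "transpose_mat S = S"
  shows "\<exists>Q D. orthonormal_mat n Q \<and> D \<in> carrier_mat n n \<and> diagonal_mat D \<and>
    S = Q * D * transpose_mat Q"
  using assms
proof (induction n arbitrary: S)
  case 0
  thus ?case
    by (intro exI[of _ "1\<^sub>m 0"] exI[of _ S]) (auto simp: diagonal_mat_def orthonormal_mat_def)
next
  case (Suc k S)
  let ?n = "Suc k"
  have S: "S \<in> carrier_mat ?n ?n" and sym: "transpose_mat S = S" using Suc by auto
  obtain e v where v: "v \<in> carrier_vec ?n" "v \<noteq> 0\<^sub>v ?n" and ev: "S *\<^sub>v v = e \<cdot>\<^sub>v v"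
    using real_symmetric_eigenvector[OF S sym] by auto
  obtain W where W: "orthonormal_mat ?n W" and colW: "col W 0 = (1 / sqrt (v \<bullet> v)) \<cdot>\<^sub>v v"
    using orthonormal_mat_first_col[OF v] by blast
  have "S *\<^sub>v col W 0 = e \<cdot>\<^sub>v col W 0"
    unfolding colW using S v ev by (simp add: mult_mat_vec smult_smult_assoc mult.commute)
  then obtain A where A: "A \<in> carrier_mat k k" "transpose_mat A = A"
    and WSW: "transpose_mat W * (S * W) = four_block_mat (mat 1 1 (\<lambda>_. e)) (0\<^sub>m 1 k) (0\<^sub>m k 1) A"
    using symmetric_deflation[OF S sym W] by blast
  obtain Q D where Q: "orthonormal_mat k Q" and D: "D \<in> carrier_mat k k" "diagonal_mat D"
    and AQD: "A = Q * D * transpose_mat Q"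
    using Suc.IH[OF A] by blast
  obtain B D' where B: "orthonormal_mat ?n B" and D': "D' \<in> carrier_mat ?n ?n" "diagonal_mat D'"
    and "four_block_mat (mat 1 1 (\<lambda>_. e)) (0\<^sub>m 1 k) (0\<^sub>m k 1) A = B * D' * transpose_mat B"
    using four_block_diagonalization[OF Q D, of e] unfolding AQD by blast
  hence BDB: "transpose_mat W * (S * W) = B * D' * transpose_mat B" using WSW by simp
  have Wc: "W \<in> carrier_mat ?n ?n" "W * transpose_mat W = 1\<^sub>m ?n" and Bc: "B \<in> carrier_mat ?n ?n"
    using W B unfolding orthonormal_mat_def by auto
  have "W * (transpose_mat W * (S * W)) * transpose_mat W
      = (W * transpose_mat W) * S * (W * transpose_mat W)"
    using Wc(1) S by (simp add: assoc_mult_mat[of _ ?n ?n _ ?n _ ?n])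
  hence "S = W * (transpose_mat W * (S * W)) * transpose_mat W" using Wc(2) S by simp
  also have "\<dots> = (W * B) * D' * transpose_mat (W * B)"
    unfolding BDB using Wc(1) Bc D'(1)
    by (simp add: transpose_mult[of W ?n ?n B ?n] assoc_mult_mat[of _ ?n ?n _ ?n _ ?n])
  finally show ?case using orthonormal_mat_mult[OF W B] D' by blast
qed

section \<open>Nuclear norm\<close>

lemma diagonal_mult_mat_index:
  fixes D A :: "'a::comm_ring_1 mat"
  assumes D: "D \<in> carrier_mat n n" and A: "A \<in> carrier_mat n p" and dg: "diagonal_mat D"
    and i: "i < n" and j: "j < p"
  shows "(D * A) $$ (i,j) = D $$ (i,i) * A $$ (i,j)"
proof -
  have "(D * A) $$ (i,j) = (\<Sum>l\<in>{0..<n}. D $$ (i,l) * A $$ (l,j))"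
    using D A i j by (simp add: scalar_prod_def)
  also have "\<dots> = (\<Sum>l\<in>{0..<n}. if l = i then D $$ (i,i) * A $$ (i,j) else 0)"
    using dg D i unfolding diagonal_mat_def by (intro sum.cong) auto
  finally show ?thesis using i by simp
qed

lemma mult_diagonal_mat_index:
  fixes D A :: "'a::comm_ring_1 mat"
  assumes D: "D \<in> carrier_mat n n" and A: "A \<in> carrier_mat p n" and dg: "diagonal_mat D"
    and i: "i < p" and j: "j < n"
  shows "(A * D) $$ (i,j) = A $$ (i,j) * D $$ (j,j)"
proof -
  have "(A * D) $$ (i,j) = (\<Sum>l\<in>{0..<n}. A $$ (i,l) * D $$ (l,j))"
    using D A i j by (simp add: scalar_prod_def)
  also have "\<dots> = (\<Sum>l\<in>{0..<n}. if l = j then A $$ (i,j) * D $$ (j,j) else 0)"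
    using dg D j unfolding diagonal_mat_def by (intro sum.cong) auto
  finally show ?thesis using j by simp
qed

lemma proots_prod_list_linear:
  "proots (\<Prod>a\<leftarrow>xs. [:- (a::real), 1:]) = mset xs"
proof (induction xs)
  case (Cons x xs)
  have "(\<Prod>a\<leftarrow>xs. [:- a, 1:]) \<noteq> (0 :: real poly)"
    by (auto simp: prod_list_zero_iff)
  hence "proots (\<Prod>a\<leftarrow>x # xs. [:- a, 1:]) = proots [:- x, 1:] + proots (\<Prod>a\<leftarrow>xs. [:- a, 1:])"
    unfolding list.map prod_list.Cons by (intro proots_mult) auto
  thus ?case using Cons by (simp add: proots_linear_factor)
qed simp

lemma nuclear_norm_eq_sum_sqrt_diag:
  fixes Z Q D :: "real mat"
  assumes Z: "Z \<in> carrier_mat m n" and Q: "orthonormal_mat n Q" and D: "D \<in> carrier_mat n n"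
    and dg: "diagonal_mat D" and eq: "transpose_mat Z * Z = Q * D * transpose_mat Q"
  shows "nuclear_norm Z = (\<Sum>i<n. sqrt (D $$ (i,i)))"
proof -
  have "similar_mat_wit (transpose_mat Z * Z) D Q (transpose_mat Q)"
    using Z Q D eq unfolding orthonormal_mat_def by (intro similar_mat_witI[of _ _ n]) auto
  hence "similar_mat (transpose_mat Z * Z) D" unfolding similar_mat_def by blast
  hence "char_poly (transpose_mat Z * Z) = char_poly D" by (rule char_poly_similar)
  also have "upper_triangular D" using dg D unfolding upper_triangular_def diagonal_mat_def by auto
  hence "char_poly D = (\<Prod>a\<leftarrow>diag_mat D. [:- a, 1:])" by (rule char_poly_upper_triangular[OF D])
  finally have "proots (char_poly (transpose_mat Z * Z)) = mset (diag_mat D)"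
    using proots_prod_list_linear by simp
  hence "nuclear_norm Z = sum_list (map sqrt (diag_mat D))"
    unfolding nuclear_norm_def by (metis mset_map sum_mset_sum_list)
  also have "\<dots> = (\<Sum>i<n. sqrt (D $$ (i,i)))"
    using D unfolding diag_mat_def by (simp add: sum_list_sum_nth atLeast0LessThan)
  finally show ?thesis .
qed

lemma psd_nuclear_norm_eq_trace:
  fixes M :: "real mat"
  assumes psd: "psd M"
  shows "nuclear_norm M = trace M"
proof -
  define n where "n = dim_row M"
  have M: "M \<in> carrier_mat n n" and sym: "transpose_mat M = M"
    and pos: "\<And>x. x \<in> carrier_vec n \<Longrightarrow> x \<bullet> (M *\<^sub>v x) \<ge> 0"
    using psd unfolding psd_def n_def by auto
  obtain Q D where Q: "orthonormal_mat n Q" and D: "D \<in> carrier_mat n n" "diagonal_mat D"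
    and Meq: "M = Q * D * transpose_mat Q"
    using real_symmetric_spectral[OF M sym] by blast
  have Qc: "Q \<in> carrier_mat n n" and QQ: "transpose_mat Q * Q = 1\<^sub>m n"
    using Q unfolding orthonormal_mat_def by auto
  have Dii: "D $$ (i,i) = col Q i \<bullet> (M *\<^sub>v col Q i)" if i: "i < n" for i
  proof -
    have "transpose_mat Q * (M * Q) = (transpose_mat Q * Q) * D * (transpose_mat Q * Q)"
      unfolding Meq using Qc D by (simp add: assoc_mult_mat[of _ n n _ n _ n])
    hence "D = transpose_mat Q * (M * Q)" using QQ D by simp
    thus ?thesis using i Qc M by (simp add: col_mult2[of _ n n _ n] mult_mat_vec_def)
  qed
  have "M * M = Q * (D * D) * transpose_mat Q"
  proof -
    have "M * M = Q * D * (transpose_mat Q * Q) * D * transpose_mat Q"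
      unfolding Meq using Qc D by (simp add: assoc_mult_mat[of _ n n _ n _ n])
    thus ?thesis using QQ Qc D by (simp add: assoc_mult_mat[of _ n n _ n _ n])
  qed
  moreover have DD: "(D * D) $$ (i,j) = (if i = j then (D $$ (i,i))\<^sup>2 else 0)" if "i < n" "j < n" for i j
    using diagonal_mult_mat_index[OF D(1) D(1) D(2) that] D that
    unfolding diagonal_mat_def by (auto simp: power2_eq_square)
  moreover have "diagonal_mat (D * D)" using DD D unfolding diagonal_mat_def by auto
  ultimately have "nuclear_norm M = (\<Sum>i<n. sqrt ((D * D) $$ (i,i)))"
    using nuclear_norm_eq_sum_sqrt_diag[OF M Q, of "D * D"] D sym by simp
  also have "\<dots> = (\<Sum>i<n. D $$ (i,i))"
    using DD Dii pos Qc by (intro sum.cong) auto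
  also have "\<dots> = trace M"
    unfolding Meq trace_conj_orthonormal_cols[OF Qc D(1) QQ] using D by (simp add: trace_def)
  finally show ?thesis .
qed

lemma psd_conj:
  fixes W V :: "real mat"
  assumes W: "psd W" and V: "V \<in> carrier_mat k (dim_row W)"
  shows "psd (V * W * transpose_mat V)"
proof -
  define r where "r = dim_row W"
  have Wc: "W \<in> carrier_mat r r" and Ws: "transpose_mat W = W"
    and Wp: "\<And>x. x \<in> carrier_vec r \<Longrightarrow> x \<bullet> (W *\<^sub>v x) \<ge> 0"
    using W unfolding psd_def r_def by auto
  have V: "V \<in> carrier_mat k r" using V unfolding r_def .
  let ?M = "V * W * transpose_mat V"
  have "x \<bullet> (?M *\<^sub>v x) \<ge> 0" if x: "x \<in> carrier_vec k" for x
  proof -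
    let ?y = "transpose_mat V *\<^sub>v x"
    have y: "?y \<in> carrier_vec r" using V x by auto
    have "?M *\<^sub>v x = V *\<^sub>v (W *\<^sub>v ?y)" using V Wc x
      by (simp add: assoc_mult_mat_vec[of _ k r _ k] assoc_mult_mat_vec[of _ r r _ k])
    hence "x \<bullet> (?M *\<^sub>v x) = ?y \<bullet> (W *\<^sub>v ?y)"
      using transpose_vec_mult_scalar[OF V _ x, of "W *\<^sub>v ?y"] Wc y by simp
    thus ?thesis using Wp[OF y] by simp
  qed
  moreover have "transpose_mat ?M = ?M" using V Wc Ws by (simp add: transpose_mult' assoc_mult_mat')
  ultimately show ?thesis unfolding psd_def using V Wc by auto
qed

lemma nuclear_norm_conj_psd:
  fixes W V :: "real mat"
  assumes W: "psd W" and V: "V \<in> carrier_mat k (dim_row W)"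
    and VV: "transpose_mat V * V = 1\<^sub>m (dim_row W)"
  shows "nuclear_norm (V * W * transpose_mat V) = trace W"
  using psd_nuclear_norm_eq_trace[OF psd_conj[OF W V]]
    trace_conj_orthonormal_cols[OF V _ VV, of W] W unfolding psd_def by auto

lemma symmetric_idempotent_psd:
  fixes P :: "real mat"
  assumes P: "P \<in> carrier_mat n n" and sym: "transpose_mat P = P" and idem: "P * P = P"
  shows "psd P"
  unfolding psd_def
proof (intro conjI ballI)
  fix x :: "real vec" assume "x \<in> carrier_vec (dim_row P)"
  hence x: "x \<in> carrier_vec n" using P by simp
  have "x \<bullet> (P *\<^sub>v x) = x \<bullet> ((transpose_mat P * P) *\<^sub>v x)" unfolding sym idem ..
  also have "\<dots> = (P *\<^sub>v x) \<bullet> (P *\<^sub>v x)"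
    using P x transpose_vec_mult_scalar[OF P x, of "P *\<^sub>v x"]
    by (simp add: assoc_mult_mat_vec[of _ n n _ n] comm_scalar_prod[of x n])
  also have "\<dots> \<ge> 0" unfolding scalar_prod_def by (auto intro: sum_nonneg)
  finally show "x \<bullet> (P *\<^sub>v x) \<ge> 0" .
qed (use P sym in auto)

lemma nuclear_norm_zero_mat: "nuclear_norm (0\<^sub>m n n) = 0"
proof -
  have "psd (0\<^sub>m n n :: real mat)" by (rule symmetric_idempotent_psd[of _ n]) auto
  thus ?thesis by (simp add: psd_nuclear_norm_eq_trace trace_def)
qed

lemma scalar_prod_le_sqrt:
  fixes a b :: "real vec"
  assumes a: "a \<in> carrier_vec n" and b: "b \<in> carrier_vec n" and aa: "a \<bullet> a \<le> 1"
  shows "a \<bullet> b \<le> sqrt (b \<bullet> b)"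
proof -
  define A where "A = (\<Sum>k<n. a $ k * a $ k)"
  define B where "B = (\<Sum>k<n. b $ k * b $ k)"
  define C where "C = (\<Sum>k<n. a $ k * b $ k)"
  have AA: "a \<bullet> a = A" "b \<bullet> b = B" "a \<bullet> b = C"
    unfolding A_def B_def C_def scalar_prod_def using a b by (auto simp: atLeast0LessThan)
  have B0: "B \<ge> 0" unfolding B_def by (auto intro: sum_nonneg)
  define s where "s = sqrt B"
  have s0: "s \<ge> 0" and ss: "s * s = B" unfolding s_def using B0 by auto
  show ?thesis
  proof (cases "s = 0")
    case True
    hence "\<forall>k\<in>{..<n}. b $ k * b $ k = 0" using ss unfolding B_def
      by (subst sum_nonneg_eq_0_iff[symmetric]) auto
    hence "C = 0" unfolding C_def by auto
    thus ?thesis using AA True s_def by simp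
  next
    case False
    hence sp: "s > 0" using s0 by auto
    \<comment> \<open>expand \<open>\<parallel>s a - b\<parallel>\<^sup>2 \<ge> 0\<close>\<close>
    have "0 \<le> (\<Sum>k<n. (s * a $ k - b $ k) * (s * a $ k - b $ k))" by (auto intro: sum_nonneg)
    also have "\<dots> = s * s * A - 2 * s * C + B"
      unfolding A_def B_def C_def
      by (simp add: algebra_simps sum.distrib sum_subtractf sum_distrib_left)
    finally have "2 * s * C \<le> s * s * A + B" by simp
    also have "\<dots> \<le> s * s + s * s" using aa AA ss sp B0 by (simp add: mult_left_le)
    finally have "C \<le> s" using sp by (simp add: algebra_simps)
    thus ?thesis using AA s_def by simp
  qed
qed

lemma symmetric_idempotent_diag_le_one:
  fixes G :: "real mat"
  assumes G: "G \<in> carrier_mat n n" and sym: "transpose_mat G = G" and idem: "G * G = G"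
    and i: "i < n"
  shows "G $$ (i,i) \<le> 1"
proof -
  have Gij: "G $$ (j,i) = G $$ (i,j)" if "j < n" for j
    using arg_cong[OF sym, of "\<lambda>M. M $$ (i,j)"] i that G by auto
  have "G $$ (i,i) = (G * G) $$ (i,i)" unfolding idem ..
  also have "\<dots> = (\<Sum>j\<in>{0..<n}. G $$ (i,j) * G $$ (i,j))"
    using G i Gij by (simp add: scalar_prod_def)
  finally have eq: "G $$ (i,i) = (\<Sum>j\<in>{0..<n}. G $$ (i,j) * G $$ (i,j))" .
  have "G $$ (i,i) * G $$ (i,i) \<le> (\<Sum>j\<in>{0..<n}. G $$ (i,j) * G $$ (i,j))"
    by (rule member_le_sum[of i "{0..<n}" "\<lambda>j. G $$ (i,j) * G $$ (i,j)"]) (use i in auto)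
  hence "G $$ (i,i) * G $$ (i,i) \<le> G $$ (i,i)" using eq by simp
  thus ?thesis using mult_strict_left_mono[of 1 "G $$ (i,i)" "G $$ (i,i)"]
    by (cases "G $$ (i,i) > 1") auto
qed

lemma gram_mult_orthonormal:
  fixes A Q D :: "real mat"
  assumes A: "A \<in> carrier_mat m n" and Q: "orthonormal_mat n Q" and D: "D \<in> carrier_mat n n"
    and eq: "transpose_mat A * A = Q * D * transpose_mat Q"
  shows "transpose_mat (A * Q) * (A * Q) = D"
proof -
  have Qc: "Q \<in> carrier_mat n n" and QQ: "transpose_mat Q * Q = 1\<^sub>m n"
    using Q unfolding orthonormal_mat_def by auto
  note dims = carrier_matD[OF A] carrier_matD[OF Qc]
  have "transpose_mat (A * Q) * (A * Q) = transpose_mat Q * (transpose_mat A * A) * Q"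
    by (simp add: dims transpose_mult' assoc_mult_mat')
  also have "\<dots> = (transpose_mat Q * Q) * D * (transpose_mat Q * Q)"
    unfolding eq using Qc D by (simp add: assoc_mult_mat[of _ n n _ n _ n])
  finally show ?thesis using QQ D by simp
qed

lemma projection_mult_orthonormal_col_le_one:
  fixes P Q :: "real mat"
  assumes P: "P \<in> carrier_mat n n" and Ps: "transpose_mat P = P" and Pi: "P * P = P"
    and Q: "orthonormal_mat n Q" and i: "i < n"
  shows "col (P * Q) i \<bullet> col (P * Q) i \<le> 1"
proof -
  have Qc: "Q \<in> carrier_mat n n" and QQ': "Q * transpose_mat Q = 1\<^sub>m n"
    using Q unfolding orthonormal_mat_def by auto
  define G where "G = transpose_mat Q * P * Q"
  have G: "G \<in> carrier_mat n n" unfolding G_def using Qc P by auto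
  have PQ_gram: "transpose_mat (P * Q) * (P * Q) = G"
  proof -
    have "transpose_mat (P * Q) * (P * Q) = transpose_mat Q * (transpose_mat P * P) * Q"
      using P Qc by (simp add: transpose_mult[of P n n Q n] assoc_mult_mat[of _ n n _ n _ n])
    thus ?thesis unfolding Ps Pi G_def .
  qed
  have "transpose_mat G = G" unfolding PQ_gram[symmetric]
    using transpose_mult[of "transpose_mat (P * Q)" n n "P * Q" n] P Qc by simp
  moreover have "G * G = G"
  proof -
    have "G * G = transpose_mat Q * P * (Q * transpose_mat Q) * P * Q"
      unfolding G_def using Qc P by (simp add: assoc_mult_mat[of _ n n _ n _ n])
    also have "\<dots> = transpose_mat Q * (P * P) * Q" unfolding QQ' using Qc P
      by (simp add: assoc_mult_mat[of _ n n _ n _ n])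
    finally show ?thesis unfolding Pi G_def .
  qed
  ultimately have "G $$ (i,i) \<le> 1" by (rule symmetric_idempotent_diag_le_one[OF G _ _ i])
  moreover have "G $$ (i,i) = col (P * Q) i \<bullet> col (P * Q) i"
    unfolding PQ_gram[symmetric] using P Qc i by simp
  ultimately show ?thesis by simp
qed

lemma trace_mult_projection_le_nuclear_norm:
  fixes Z P :: "real mat"
  assumes Z: "Z \<in> carrier_mat n n" and P: "P \<in> carrier_mat n n"
    and Ps: "transpose_mat P = P" and Pi: "P * P = P"
  shows "trace (Z * P) \<le> nuclear_norm Z"
proof -
  have "transpose_mat (transpose_mat Z * Z) = transpose_mat Z * Z"
    using transpose_mult[of "transpose_mat Z" n n Z n] Z by auto
  then obtain Q D where Q: "orthonormal_mat n Q" and D: "D \<in> carrier_mat n n" "diagonal_mat D"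
    and ZZ: "transpose_mat Z * Z = Q * D * transpose_mat Q"
    using real_symmetric_spectral[of "transpose_mat Z * Z" n] Z by auto
  have Qc: "Q \<in> carrier_mat n n" and QQ': "Q * transpose_mat Q = 1\<^sub>m n"
    using Q unfolding orthonormal_mat_def by auto
  have ZQ: "Z * Q \<in> carrier_mat n n" and PQ: "P * Q \<in> carrier_mat n n" using Z P Qc by auto
  have "trace (Z * P) = trace (P * Z * Q * transpose_mat Q)"
    using trace_mult_comm[OF Z P] P Z Qc QQ' by (simp add: assoc_mult_mat[of _ n n _ n _ n])
  also have "\<dots> = trace (transpose_mat Q * (P * Z * Q))"
    by (rule trace_mult_comm) (use P Z Qc in auto)
  also have "transpose_mat Q * (P * Z * Q) = transpose_mat (P * Q) * (Z * Q)"
    using P Z Qc Ps by (simp add: transpose_mult[of P n n Q n] assoc_mult_mat[of _ n n _ n _ n])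
  also have "trace (transpose_mat (P * Q) * (Z * Q)) = (\<Sum>i<n. col (P * Q) i \<bullet> col (Z * Q) i)"
    unfolding trace_def using PQ ZQ Qc by simp
  also have "\<dots> \<le> (\<Sum>i<n. sqrt (D $$ (i,i)))"
  proof (rule sum_mono)
    fix i assume "i \<in> {..<n}"
    hence i: "i < n" by auto
    have "(transpose_mat M * M) $$ (i,i) = col M i \<bullet> col M i" if "M \<in> carrier_mat n n" for M
      using that i by simp
    from this[OF ZQ] have "col (Z * Q) i \<bullet> col (Z * Q) i = D $$ (i,i)"
      unfolding gram_mult_orthonormal[OF Z Q D(1) ZZ] by simp
    thus "col (P * Q) i \<bullet> col (Z * Q) i \<le> sqrt (D $$ (i,i))"
      using scalar_prod_le_sqrt[where b = "col (Z * Q) i" and n = n]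
        projection_mult_orthonormal_col_le_one[OF P Ps Pi Q i] PQ ZQ i by auto
  qed
  also have "\<dots> = nuclear_norm Z" using nuclear_norm_eq_sum_sqrt_diag[OF Z Q D ZZ] by simp
  finally show ?thesis .
qed

section \<open>Rank and a pseudo-inverse\<close>

lemma (in vec_space) cols_mult_subset_span:
  assumes M: "M \<in> carrier_mat n k" and N: "N \<in> carrier_mat k p"
  shows "set (cols (M * N)) \<subseteq> span (set (cols M))"
proof
  have X: "set (cols M) \<subseteq> carrier_vec n" using M cols_dim by blast
  fix y assume "y \<in> set (cols (M * N))"
  then obtain j where j: "j < p" and y: "y = col (M * N) j" using M N unfolding cols_def by auto
  have "lincomb_list (\<lambda>i. col N j $ i) (cols M)
      = mat_of_cols n (cols M) *\<^sub>v vec (length (cols M)) (\<lambda>i. col N j $ i)"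
    by (rule lincomb_list_as_mat_mult) (use X in auto)
  also have "\<dots> = M *\<^sub>v col N j"
    using M N j mat_of_cols_cols[of M] by (auto intro!: arg_cong[of _ _ "(*\<^sub>v) M"] eq_vecI)
  also have "\<dots> = y" unfolding y using M N j by (simp add: col_mult2 mult_mat_vec_def)
  finally have "y \<in> span_list (cols M)" using in_span_listI by metis
  thus "y \<in> span (set (cols M))" using span_list_as_span[OF X] by simp
qed

lemma (in vec_space) rank_mat_mult_le:
  assumes M: "M \<in> carrier_mat n k" and N: "N \<in> carrier_mat k p"
  shows "rank (M * N) \<le> rank M"
proof -
  let ?X = "set (cols M)" and ?Y = "set (cols (M * N))"
  have X: "?X \<subseteq> carrier_vec n" using M cols_dim by blast
  have MN: "M * N \<in> carrier_mat n p" using M N by auto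
  have Y: "?Y \<subseteq> carrier_vec n" using MN cols_dim by blast
  have span_eq: "span (?X \<union> ?Y) = span ?X"
  proof
    have "?X \<union> ?Y \<subseteq> span ?X" using cols_mult_subset_span[OF M N] in_own_span[OF X] by auto
    thus "span (?X \<union> ?Y) \<subseteq> span ?X" using span_subsetI[OF X] by blast
    show "span ?X \<subseteq> span (?X \<union> ?Y)" by (rule span_is_monotone) auto
  qed
  define C where "C = mat_of_cols n (cols M @ cols (M * N))"
  have C: "C \<in> carrier_mat n (length (cols M @ cols (M * N)))" unfolding C_def by auto
  have cC: "set (cols C) = ?X \<union> ?Y" unfolding C_def using X Y by (subst cols_mat_of_cols) auto
  have rC: "rank C = rank M" unfolding rank_def cC span_eq ..
  obtain S where Smax: "maximal S (\<lambda>T. T \<subseteq> ?Y \<and> lin_indpt T)"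
    using maximal_exists[of "(\<lambda>T. T \<subseteq> ?Y \<and> lin_indpt T)" "card ?Y" "{}"]
    by (meson List.finite_set card_mono empty_iff empty_subsetI finite_lin_indpt2 rev_finite_subset)
  have "rank (M * N) = card S" by (rule rank_card_indpt[OF MN Smax])
  also have "card S \<le> rank C"
    by (rule rank_ge_card_indpt[OF C]) (use Smax cC in \<open>auto simp: maximal_def\<close>)
  finally show ?thesis using rC by simp
qed

lemma (in vec_space) orthogonal_set_lin_indpt:
  assumes U: "U \<subseteq> carrier_vec n" "finite U" and nz: "\<And>u. u \<in> U \<Longrightarrow> u \<bullet> u \<noteq> 0"
    and orth: "\<And>u w. u \<in> U \<Longrightarrow> w \<in> U \<Longrightarrow> u \<noteq> w \<Longrightarrow> u \<bullet> w = 0"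
  shows "lin_indpt U"
proof
  assume "lin_dep U"
  from finite_lin_dep[OF U(2) this U(1)] obtain a v where
    lc: "lincomb a U = 0\<^sub>v n" and vU: "v \<in> U" and av: "a v \<noteq> 0" by auto
  have v: "v \<in> carrier_vec n" using vU U by auto
  have "0 = lincomb a U \<bullet> v" unfolding lc using v by simp
  also have "\<dots> = (\<Sum>k<n. (\<Sum>x\<in>U. a x * x $ k) * v $ k)"
    unfolding scalar_prod_def using v U by (auto simp: lincomb_index atLeast0LessThan intro!: sum.cong)
  also have "\<dots> = (\<Sum>x\<in>U. a x * (x \<bullet> v))"
    unfolding scalar_prod_def using v U
    by (simp add: sum_distrib_left sum_distrib_right sum.swap[of _ U] mult.assoc atLeast0LessThan)
  also have "\<dots> = (\<Sum>x\<in>U. if x = v then a v * (v \<bullet> v) else 0)"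
    using orth vU by (intro sum.cong) auto
  also have "\<dots> = a v * (v \<bullet> v)" using vU U by simp
  finally show False using av nz[OF vU] by simp
qed

lemma gram_diag_zero_col:
  fixes M :: "real mat"
  assumes M: "M \<in> carrier_mat m n" and j: "j < n" and z: "(transpose_mat M * M) $$ (j,j) = 0"
  shows "col M j = 0\<^sub>v m"
proof -
  have "col M j \<bullet> col M j = 0" using z M j by simp
  moreover have "col M j \<in> carrier_vec m" using M by (auto intro: carrier_vecI)
  ultimately show ?thesis
    using conjugate_square_eq_0_vec[of "col M j" m] by (simp add: vec_conjugate_real)
qed

lemma rank_orthogonal_cols:
  fixes M :: "real mat"
  assumes M: "M \<in> carrier_mat m n" and dg: "diagonal_mat (transpose_mat M * M)"
  shows "vec_space.rank m M = card {i. i < n \<and> (transpose_mat M * M) $$ (i,i) \<noteq> 0}"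
proof -
  interpret vec_space "TYPE(real)" m .
  let ?G = "transpose_mat M * M"
  define I where "I = {i. i < n \<and> ?G $$ (i,i) \<noteq> 0}"
  define U where "U = col M ` I"
  have Gij: "?G $$ (i,j) = col M i \<bullet> col M j" if "i < n" "j < n" for i j using that M by simp
  have G0: "col M i \<bullet> col M j = 0" if "i < n" "j < n" "i \<noteq> j" for i j
    using dg that M Gij unfolding diagonal_mat_def by auto
  have nz: "col M i \<bullet> col M i \<noteq> 0" if "i \<in> I" for i using that Gij unfolding I_def by auto
  have inj: "inj_on (col M) I"
  proof (rule inj_onI)
    fix i j assume "i \<in> I" "j \<in> I" "col M i = col M j"
    thus "i = j" using G0[of i j] nz[of i] unfolding I_def by auto
  qed
  have U: "U \<subseteq> carrier_vec m" "finite U" unfolding U_def I_def using M by auto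
  have "lin_indpt U"
    by (rule orthogonal_set_lin_indpt[OF U]) (auto simp: U_def I_def Gij intro!: G0)
  have "maximal U (\<lambda>T. T \<subseteq> set (cols M) \<and> lin_indpt T)"
    unfolding maximal_def
  proof (intro conjI allI impI)
    show "U \<subseteq> set (cols M)" unfolding U_def I_def cols_def using M by auto
    show "lin_indpt U" by fact
    fix T assume T: "U \<subseteq> T \<and> T \<subseteq> set (cols M) \<and> lin_indpt T"
    have "0\<^sub>v m \<notin> T" using vs_zero_lin_dep T cols_dim M by blast
    have "T \<subseteq> U"
    proof
      fix t assume "t \<in> T"
      then obtain j where j: "j < n" "t = col M j" using T M unfolding cols_def by auto
      show "t \<in> U"
      proof (cases "j \<in> I")
        case False
        hence "t = 0\<^sub>v m" using gram_diag_zero_col[OF M] j unfolding I_def by auto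
        thus ?thesis using \<open>t \<in> T\<close> \<open>0\<^sub>v m \<notin> T\<close> by simp
      qed (use j in \<open>auto simp: U_def\<close>)
    qed
    thus "T = U" using T by auto
  qed
  hence "rank M = card U" by (rule rank_card_indpt[OF M])
  also have "\<dots> = card I" unfolding U_def by (rule card_image[OF inj])
  finally show ?thesis unfolding I_def .
qed

definition diag_support :: "real mat \<Rightarrow> real mat" where
  "diag_support D = mat (dim_row D) (dim_row D) (\<lambda>(i,j). if i = j \<and> D $$ (i,i) \<noteq> 0 then 1 else 0)"

definition diag_pinv :: "real mat \<Rightarrow> real mat" where
  "diag_pinv D = mat (dim_row D) (dim_row D)
     (\<lambda>(i,j). if i = j \<and> D $$ (i,i) \<noteq> 0 then 1 / D $$ (i,i) else 0)"

lemma diag_support_carrier [simp]: "D \<in> carrier_mat n n \<Longrightarrow> diag_support D \<in> carrier_mat n n"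
  and diag_pinv_carrier [simp]: "D \<in> carrier_mat n n \<Longrightarrow> diag_pinv D \<in> carrier_mat n n"
  by (auto simp: diag_support_def diag_pinv_def)

lemma transpose_diag_support [simp]: "transpose_mat (diag_support D) = diag_support D"
  and transpose_diag_pinv [simp]: "transpose_mat (diag_pinv D) = diag_pinv D"
  by (auto simp: diag_support_def diag_pinv_def intro!: eq_matI)

lemma diag_pinv_mult:
  assumes D: "D \<in> carrier_mat n n" and dg: "diagonal_mat D"
  shows "diag_pinv D * D = diag_support D"
proof (rule eq_matI)
  fix i j assume "i < dim_row (diag_support D)" "j < dim_col (diag_support D)"
  hence ij: "i < n" "j < n" using D by (auto simp: diag_support_def)
  have "diagonal_mat (diag_pinv D)" by (auto simp: diagonal_mat_def diag_pinv_def)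
  from diagonal_mult_mat_index[OF diag_pinv_carrier[OF D] D this ij]
  show "(diag_pinv D * D) $$ (i,j) = diag_support D $$ (i,j)"
    using ij dg D unfolding diag_pinv_def diag_support_def diagonal_mat_def by auto
qed (use D in \<open>auto simp: diag_support_def diag_pinv_def\<close>)

lemma diag_support_idem:
  assumes D: "D \<in> carrier_mat n n"
  shows "diag_support D * diag_support D = diag_support D"
proof (rule eq_matI)
  fix i j assume "i < dim_row (diag_support D)" "j < dim_col (diag_support D)"
  hence ij: "i < n" "j < n" using D by (auto simp: diag_support_def)
  have "diagonal_mat (diag_support D)" by (auto simp: diagonal_mat_def diag_support_def)
  from diagonal_mult_mat_index[OF diag_support_carrier[OF D] _ this ij, of "diag_support D"] D
  show "(diag_support D * diag_support D) $$ (i,j) = diag_support D $$ (i,j)"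
    using ij D unfolding diag_support_def by auto
qed (use D in \<open>auto simp: diag_support_def\<close>)

lemma trace_diag_support:
  "trace (diag_support D) = real (card {i. i < dim_row D \<and> D $$ (i,i) \<noteq> 0})"
proof -
  have "trace (diag_support D) = (\<Sum>i<dim_row D. if D $$ (i,i) \<noteq> 0 then 1 else 0)"
    unfolding trace_def diag_support_def by (intro sum.cong) auto
  also have "\<dots> = real (card {i. i < dim_row D \<and> D $$ (i,i) \<noteq> 0})"
    by (simp add: sum.If_cases lessThan_def Collect_conj_eq Int_commute)
  finally show ?thesis .
qed

lemma mult_diag_support_gram:
  fixes M :: "real mat"
  assumes M: "M \<in> carrier_mat m n"
  shows "M * diag_support (transpose_mat M * M) = M"
proof (rule eq_matI)
  let ?E = "diag_support (transpose_mat M * M)"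
  have E: "?E \<in> carrier_mat n n" using M by simp
  fix i j assume "i < dim_row M" "j < dim_col M"
  hence ij: "i < m" "j < n" using M by auto
  have "diagonal_mat ?E" by (auto simp: diagonal_mat_def diag_support_def)
  from mult_diagonal_mat_index[OF E M this ij]
  have "(M * ?E) $$ (i,j) = M $$ (i,j) * ?E $$ (j,j)" .
  also have "\<dots> = M $$ (i,j)"
  proof (cases "(transpose_mat M * M) $$ (j,j) = 0")
    case True
    from arg_cong[OF gram_diag_zero_col[OF M ij(2) True], of "\<lambda>v. v $ i"] show ?thesis
      using ij M by simp
  qed (use ij M in \<open>simp add: diag_support_def\<close>)
  finally show "(M * ?E) $$ (i,j) = M $$ (i,j)" .
qed (use M in \<open>auto simp: diag_support_def\<close>)

lemma rank_eq_card_nonzero_gram_eigenvalues: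
  fixes A Q D :: "real mat"
  assumes A: "A \<in> carrier_mat m n" and Q: "orthonormal_mat n Q" and D: "D \<in> carrier_mat n n"
    and dg: "diagonal_mat D" and eq: "transpose_mat A * A = Q * D * transpose_mat Q"
  shows "mrank A = card {i. i < n \<and> D $$ (i,i) \<noteq> 0}"
proof -
  interpret vec_space "TYPE(real)" m .
  have Qc: "Q \<in> carrier_mat n n" and QQ': "Q * transpose_mat Q = 1\<^sub>m n"
    using Q unfolding orthonormal_mat_def by auto
  have "A * Q * transpose_mat Q = A" using A Qc QQ' by (simp add: assoc_mult_mat[of _ m n _ n _ n])
  hence "rank A = rank (A * Q)"
    using rank_mat_mult_le[OF A Qc] rank_mat_mult_le[of "A * Q" n "transpose_mat Q" n] A Qc
    by (metis le_antisym mult_carrier_mat transpose_carrier_mat)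
  also have "\<dots> = card {i. i < n \<and> D $$ (i,i) \<noteq> 0}"
    using rank_orthogonal_cols[of "A * Q" m n] gram_mult_orthonormal[OF A Q D eq] A Qc dg by simp
  finally show ?thesis unfolding mrank_def using A by simp
qed

text \<open>With \<open>A\<^sup>T A = Q D Q\<^sup>T\<close>, the matrix \<open>Q D\<^sup>+ Q\<^sup>T A\<^sup>T\<close> is the Moore--Penrose inverse of \<open>A\<close>.\<close>

lemma pseudo_inverse_mult:
  fixes A Q D :: "real mat"
  assumes A: "A \<in> carrier_mat m n" and Q: "orthonormal_mat n Q" and D: "D \<in> carrier_mat n n"
    and dg: "diagonal_mat D" and AA: "transpose_mat A * A = Q * D * transpose_mat Q"
  shows "Q * diag_pinv D * transpose_mat Q * transpose_mat A * A = Q * diag_support D * transpose_mat Q"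
proof -
  have Qc: "Q \<in> carrier_mat n n" and QQ: "transpose_mat Q * Q = 1\<^sub>m n"
    using Q unfolding orthonormal_mat_def by auto
  note dims = carrier_matD[OF A] carrier_matD[OF Qc] carrier_matD[OF D]
    carrier_matD[OF diag_pinv_carrier[OF D]]
  have "Q * diag_pinv D * transpose_mat Q * transpose_mat A * A
      = Q * diag_pinv D * (transpose_mat Q * (transpose_mat A * A))"
    by (simp add: dims assoc_mult_mat')
  also have "\<dots> = Q * (diag_pinv D * D) * transpose_mat Q"
    unfolding AA by (simp add: dims assoc_mult_mat' QQ flip: assoc_mult_mat'[of "transpose_mat Q" Q])
  finally show ?thesis unfolding diag_pinv_mult[OF D dg] .
qed

lemma pseudo_inverse_exists:
  fixes A :: "real mat"
  assumes A: "A \<in> carrier_mat m n"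
  shows "\<exists>Ap. Ap \<in> carrier_mat n m \<and>
    transpose_mat (Ap * A) = Ap * A \<and> Ap * A * (Ap * A) = Ap * A \<and>
    transpose_mat (A * Ap) = A * Ap \<and> A * Ap * (A * Ap) = A * Ap \<and>
    A * (Ap * A) = A \<and> real (mrank A) = trace (Ap * A)"
proof -
  have "transpose_mat (transpose_mat A * A) = transpose_mat A * A"
    using A by (simp add: transpose_mult')
  then obtain Q D where Q: "orthonormal_mat n Q" and D: "D \<in> carrier_mat n n" "diagonal_mat D"
    and AA: "transpose_mat A * A = Q * D * transpose_mat Q"
    using real_symmetric_spectral[of "transpose_mat A * A" n] A by auto
  have Qc: "Q \<in> carrier_mat n n" and QQ: "transpose_mat Q * Q = 1\<^sub>m n"
    and QQ': "Q * transpose_mat Q = 1\<^sub>m n"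
    using Q unfolding orthonormal_mat_def by auto
  define E where "E = diag_support D"
  define Ap where "Ap = Q * diag_pinv D * transpose_mat Q * transpose_mat A"
  have E: "E \<in> carrier_mat n n" and Ap: "Ap \<in> carrier_mat n m"
    unfolding E_def Ap_def using D Qc A by auto
  note dims = carrier_matD[OF A] carrier_matD[OF Qc] carrier_matD[OF D(1)] carrier_matD[OF E]
    carrier_matD[OF diag_pinv_carrier[OF D(1)]]
  have AQE: "A * Q * E = A * Q"
    using mult_diag_support_gram[of "A * Q" m n] gram_mult_orthonormal[OF A Q D(1) AA] A Qc
    unfolding E_def by simp
  have P1: "Ap * A = Q * E * transpose_mat Q"
    unfolding Ap_def E_def by (rule pseudo_inverse_mult[OF A Q D AA])
  have AP1: "A * (Ap * A) = A"
  proof -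
    have "A * (Ap * A) = A * Q * E * transpose_mat Q" unfolding P1 by (simp add: dims assoc_mult_mat')
    also have "\<dots> = A" unfolding AQE by (simp add: dims assoc_mult_mat' QQ')
    finally show ?thesis .
  qed
  have "Ap * A * (Ap * A) = Ap * A"
  proof -
    have "Ap * A * (Ap * A) = Q * (E * (transpose_mat Q * Q) * E) * transpose_mat Q"
      unfolding P1 by (simp add: dims assoc_mult_mat')
    thus ?thesis unfolding QQ P1 using E diag_support_idem[OF D(1)] by (simp add: E_def)
  qed
  moreover have "transpose_mat (Ap * A) = Ap * A"
    unfolding P1 using E by (simp add: dims transpose_mult' assoc_mult_mat' E_def)
  moreover have "transpose_mat (A * Ap) = A * Ap"
    unfolding Ap_def by (simp add: dims transpose_mult' assoc_mult_mat')
  moreover have "A * Ap * (A * Ap) = A * (Ap * A) * Ap"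
    by (simp add: dims carrier_matD[OF Ap] assoc_mult_mat')
  hence "A * Ap * (A * Ap) = A * Ap" unfolding AP1 .
  moreover have "trace (Ap * A) = trace E"
    unfolding P1 by (rule trace_conj_orthonormal_cols[OF Qc E QQ])
  hence "real (mrank A) = trace (Ap * A)"
    unfolding E_def trace_diag_support rank_eq_card_nonzero_gram_eigenvalues[OF A Q D AA]
    using dims by simp
  ultimately show ?thesis using Ap AP1 by blast
qed

section \<open>The two problems\<close>

lemma rank_le_nuclear_norm_add:
  fixes A Z L :: "real mat"
  assumes A: "A \<in> carrier_mat m n" and Z: "Z \<in> carrier_mat n n" and L: "L \<in> carrier_mat m m"
    and eq: "A = A * Z + L * A"
  shows "real (mrank A) \<le> nuclear_norm Z + nuclear_norm L"
proof -
  obtain Ap where Ap: "Ap \<in> carrier_mat n m"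
    and P1: "transpose_mat (Ap * A) = Ap * A" "Ap * A * (Ap * A) = Ap * A"
    and P2: "transpose_mat (A * Ap) = A * Ap" "A * Ap * (A * Ap) = A * Ap"
    and rk: "real (mrank A) = trace (Ap * A)"
    using pseudo_inverse_exists[OF A] by blast
  note dims = carrier_matD[OF A] carrier_matD[OF Z] carrier_matD[OF L] carrier_matD[OF Ap]
  have "Ap * A = Ap * (A * Z) + Ap * (L * A)"
    using arg_cong[OF eq, of "\<lambda>M. Ap * M"] mult_add_distrib_mat[of Ap n m "A * Z" n "L * A"] A Z L Ap
    by auto
  hence "trace (Ap * A) = trace (Ap * (A * Z)) + trace (Ap * (L * A))"
    using trace_add[of "Ap * (A * Z)" n "Ap * (L * A)"] A Z L Ap by auto
  also have "trace (Ap * (A * Z)) = trace (Z * (Ap * A))"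
    using trace_mult_comm[of "Ap * A" n n Z] A Z Ap by (simp add: dims assoc_mult_mat')
  also have "\<dots> \<le> nuclear_norm Z"
    using trace_mult_projection_le_nuclear_norm[OF Z _ P1] A Ap by auto
  also have "trace (Ap * (L * A)) = trace (L * (A * Ap))"
    using trace_mult_comm[of Ap n m "L * A"] A L Ap by (simp add: dims assoc_mult_mat')
  also have "\<dots> \<le> nuclear_norm L"
    using trace_mult_projection_le_nuclear_norm[OF L _ P2] A Ap by auto
  finally show ?thesis using rk by simp
qed

lemma rank_attained_by_nuclear_norm:
  fixes A :: "real mat"
  assumes A: "A \<in> carrier_mat m n"
  shows "\<exists>Z. Z \<in> carrier_mat n n \<and> A = A * Z \<and> nuclear_norm Z = real (mrank A)"
proof -
  obtain Ap where Ap: "Ap \<in> carrier_mat n m"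
    and P1: "transpose_mat (Ap * A) = Ap * A" "Ap * A * (Ap * A) = Ap * A"
    and AP: "A * (Ap * A) = A" and rk: "real (mrank A) = trace (Ap * A)"
    using pseudo_inverse_exists[OF A] by blast
  have "Ap * A \<in> carrier_mat n n" using A Ap by auto
  hence "nuclear_norm (Ap * A) = trace (Ap * A)"
    using psd_nuclear_norm_eq_trace symmetric_idempotent_psd P1 by blast
  thus ?thesis using AP rk \<open>Ap * A \<in> carrier_mat n n\<close> by metis
qed

lemma diagonal_mat_commute_blockwise:
  fixes S W :: "real mat"
  assumes S: "S \<in> carrier_mat r r" and dS: "diagonal_mat S" and W: "W \<in> carrier_mat r r"
    and blk: "\<forall>i < r. \<forall>j < r. S $$ (i, i) \<noteq> S $$ (j, j) \<longrightarrow> W $$ (i, j) = 0"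
  shows "S * W = W * S"
proof (rule eq_matI)
  fix i j assume "i < dim_row (W * S)" "j < dim_col (W * S)"
  hence ij: "i < r" "j < r" using S W by auto
  show "(S * W) $$ (i,j) = (W * S) $$ (i,j)"
    using diagonal_mult_mat_index[OF S W dS ij] mult_diagonal_mat_index[OF S W dS ij] blk ij
    by (cases "S $$ (i,i) = S $$ (j,j)") auto
qed (use S W in auto)

lemma feasible_P_minus:
  assumes "X \<in> carrier_mat m n" "E \<in> carrier_mat m n"
  shows "feasible_P X (X - E) E"
  unfolding feasible_P_def using assms add_minus_cancel_mat(2)[OF assms] by auto

lemma feasible_U_cost_ge_rank:
  assumes X: "X \<in> carrier_mat m n" and fU: "feasible_U X Z L E"
  shows "real (mrank (X - E)) \<le> nuclear_norm Z + nuclear_norm L"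
  using fU X unfolding feasible_U_def by (intro rank_le_nuclear_norm_add[of _ m n]) auto

lemma minimizer_U_imp_minimizer_P:
  assumes X: "X \<in> carrier_mat m n" and mU: "minimizer_U X lam f Zs Ls Es"
  shows "minimizer_P X lam f (X - Es) Es"
  unfolding minimizer_P_def
proof (intro conjI allI impI)
  have fU: "feasible_U X Zs Ls Es" and Es: "Es \<in> carrier_mat m n"
    using mU X unfolding minimizer_U_def feasible_U_def by auto
  show "feasible_P X (X - Es) Es" by (rule feasible_P_minus[OF X Es])
  fix A' E' assume "feasible_P X A' E'"
  hence A': "A' \<in> carrier_mat m n" and E': "E' \<in> carrier_mat m n" and XA: "X - E' = A'"
    unfolding feasible_P_def using X add_minus_cancel_mat(1) by auto
  obtain Z' where Z': "Z' \<in> carrier_mat n n" "A' = A' * Z'" and nnZ: "nuclear_norm Z' = real (mrank A')"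
    using rank_attained_by_nuclear_norm[OF A'] by blast
  have "feasible_U X Z' (0\<^sub>m m m) E'"
    unfolding feasible_U_def XA using Z' E' A' X by auto
  with mU have "nuclear_norm Zs + nuclear_norm Ls + lam * f Es
      \<le> nuclear_norm Z' + nuclear_norm (0\<^sub>m m m) + lam * f E'"
    unfolding minimizer_U_def by blast
  hence "nuclear_norm Zs + nuclear_norm Ls + lam * f Es \<le> real (mrank A') + lam * f E'"
    using nnZ by (simp add: nuclear_norm_zero_mat)
  thus "real (mrank (X - Es)) + lam * f Es \<le> real (mrank A') + lam * f E'"
    using feasible_U_cost_ge_rank[OF X fU] by simp
qed

lemma svd_latent_decomposition:
  fixes A U S V W :: "real mat"
  assumes svd: "skinny_svd A r U S V" and W: "W \<in> carrier_mat r r"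
    and blk: "\<forall>i < r. \<forall>j < r. S $$ (i, i) \<noteq> S $$ (j, j) \<longrightarrow> W $$ (i, j) = 0"
  shows "A = A * (V * W * transpose_mat V) + U * (1\<^sub>m r - W) * transpose_mat U * A"
proof -
  have U: "U \<in> carrier_mat (dim_row A) r" and V: "V \<in> carrier_mat (dim_col A) r"
    and S: "S \<in> carrier_mat r r" and UU: "transpose_mat U * U = 1\<^sub>m r"
    and VV: "transpose_mat V * V = 1\<^sub>m r" and dS: "diagonal_mat S"
    and A: "A = U * S * transpose_mat V"
    using svd unfolding skinny_svd_def by auto
  note dims = carrier_matD[OF U] carrier_matD[OF V] carrier_matD[OF S] carrier_matD[OF W]
  have "A * (V * W * transpose_mat V) = U * (S * W) * transpose_mat V"
    by (subst A) (simp add: dims assoc_mult_mat' VV flip: assoc_mult_mat'[of "transpose_mat V" V])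
  moreover have "U * (1\<^sub>m r - W) * transpose_mat U * A = U * ((1\<^sub>m r - W) * S) * transpose_mat V"
    by (subst A) (simp add: dims assoc_mult_mat' UU flip: assoc_mult_mat'[of "transpose_mat U" U])
  moreover have "S * W + (1\<^sub>m r - W) * S = S"
    using diagonal_mat_commute_blockwise[OF S dS W blk] S W
    by (simp add: minus_mult_distrib_mat[of _ r r _ _ r]) (auto intro!: eq_matI)
  moreover have "U * (S * W + (1\<^sub>m r - W) * S) * transpose_mat V
      = U * (S * W) * transpose_mat V + U * ((1\<^sub>m r - W) * S) * transpose_mat V"
    by (subst mult_add_distrib_mat[OF U], (use S W in auto)[2], rule add_mult_distrib_mat)
      (use U S W V in auto)
  ultimately show ?thesis using A by simp
qed

lemma minimizer_P_imp_minimizer_U: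
  assumes X: "X \<in> carrier_mat m n" and mP: "minimizer_P X lam f As Es"
    and svd: "skinny_svd As (mrank As) U S V" and W: "W \<in> carrier_mat (mrank As) (mrank As)"
    and blk: "\<forall>i < mrank As. \<forall>j < mrank As. S $$ (i, i) \<noteq> S $$ (j, j) \<longrightarrow> W $$ (i, j) = 0"
    and psdW: "psd W" and psdIW: "psd (1\<^sub>m (mrank As) - W)"
  shows "minimizer_U X lam f (V * W * transpose_mat V)
    (U * (1\<^sub>m (mrank As) - W) * transpose_mat U) Es"
  unfolding minimizer_U_def
proof (intro conjI allI impI)
  let ?r = "mrank As" and ?Z = "V * W * transpose_mat V" and ?L = "U * (1\<^sub>m (mrank As) - W) * transpose_mat U"
  have As: "As \<in> carrier_mat m n" and Es: "Es \<in> carrier_mat m n" and XE: "X - Es = As"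
    and optP: "\<And>A' E'. feasible_P X A' E' \<Longrightarrow> real ?r + lam * f Es \<le> real (mrank A') + lam * f E'"
    using mP X add_minus_cancel_mat(1) unfolding minimizer_P_def feasible_P_def by auto
  have U: "U \<in> carrier_mat m ?r" "transpose_mat U * U = 1\<^sub>m ?r"
    and V: "V \<in> carrier_mat n ?r" "transpose_mat V * V = 1\<^sub>m ?r"
    using svd As unfolding skinny_svd_def by auto
  show "feasible_U X ?Z ?L Es"
    unfolding feasible_U_def XE using svd_latent_decomposition[OF svd W blk] U V W Es X by auto
  have "nuclear_norm ?Z + nuclear_norm ?L = trace W + trace (1\<^sub>m ?r - W)"
    using nuclear_norm_conj_psd[OF psdW] nuclear_norm_conj_psd[OF psdIW] U V W by simp
  also have "\<dots> = trace (W + (1\<^sub>m ?r - W))" by (rule trace_add[symmetric]) (use W in auto)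
  also have "W + (1\<^sub>m ?r - W) = 1\<^sub>m ?r" using W by (auto intro!: eq_matI)
  finally have cost: "nuclear_norm ?Z + nuclear_norm ?L = real ?r" by (simp add: trace_one_mat)
  fix Z' L' E' assume fU: "feasible_U X Z' L' E'"
  hence "real ?r + lam * f Es \<le> real (mrank (X - E')) + lam * f E'"
    using optP feasible_P_minus[OF X] X unfolding feasible_U_def by auto
  thus "nuclear_norm ?Z + nuclear_norm ?L + lam * f Es \<le> nuclear_norm Z' + nuclear_norm L' + lam * f E'"
    using cost feasible_U_cost_ge_rank[OF X fU] by simp
qed

theorem theorem4:
  fixes X :: "real mat" and lam :: real and f :: "real mat \<Rightarrow> real" and m n :: nat
  assumes X: "X \<in> carrier_mat m n" and lam: "lam > 0"
  shows "(\<forall>As Es U S V W.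
            minimizer_P X lam f As Es \<longrightarrow>
            skinny_svd As (mrank As) U S V \<longrightarrow>
            W \<in> carrier_mat (mrank As) (mrank As) \<longrightarrow>
            (\<forall>i < mrank As. \<forall>j < mrank As. S $$ (i, i) \<noteq> S $$ (j, j) \<longrightarrow> W $$ (i, j) = 0) \<longrightarrow>
            psd W \<longrightarrow> psd (1\<^sub>m (mrank As) - W) \<longrightarrow>
            minimizer_U X lam f (V * W * transpose_mat V)
              (U * (1\<^sub>m (mrank As) - W) * transpose_mat U) Es)
       \<and> (\<forall>Zs Ls Es. minimizer_U X lam f Zs Ls Es \<longrightarrow> minimizer_P X lam f (X - Es) Es)"
  using minimizer_P_imp_minimizer_U[OF X] minimizer_U_imp_minimizer_P[OF X] by blast

end
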